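(* Let $\alpha$ be a countably infinite order type and $S$ a sierpinskisation of $\alpha$ and $\omega$. Then the join-semilattice $I_{<\omega}(S)$ is isomorphic to a join-subsemilattice of $[\omega]^{<\omega}$ and belongs to $\mathbb{J}_\alpha$, i.e. the lattice $J(I_{<\omega}(S))$ of ideals of $I_{<\omega}(S)$ contains a chain of order type $I(\alpha)$.
   Context: A sierpinskisation of a countable order type $\alpha$ and $\omega$ is a poset $(S,\le)$ whose order is the intersection of two linear orders on $S$, one of type $\alpha$ and one of type $\omega$. $I_{<\omega}(S)$ is the set of finitely generated initial segments of $S$ ordered by inclusion (join $=$ union). $[\omega]^{<\omega}$ is the set of finite subsets of $\mathbb{N}$ ordered by inclusion. An ideal is a non-empty up-directed initial segment; $J(\cdot)$ is the set of ideals ordered by inclusion. $\mathbb{J}_\alpha$ is the class of join-semilattices $P$ with a least element such that $J(P)$ contains a chain of type $I(\alpha)$, where $I(\alpha)$ is the order type of the chain of initial segments of a chain of type $\alpha$. *)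

theory Defs
  imports Main
begin

definition omega_type :: "'a set \<Rightarrow> 'a rel \<Rightarrow> bool" where
  "omega_type S W \<longleftrightarrow> W \<subseteq> S \<times> S \<and>
     (\<exists>h. bij_betw h S (UNIV :: nat set) \<and> (\<forall>x\<in>S. \<forall>y\<in>S. (x, y) \<in> W \<longleftrightarrow> h x \<le> h y))"

text \<open>Sierpinskisation of (S,A) and (S,W): the poset (S, A \<inter> W), where A is a linear
  order on S (of type alpha) and W a linear order on S of type omega.\<close>
definition sierpinskisation :: "'a set \<Rightarrow> 'a rel \<Rightarrow> 'a rel \<Rightarrow> bool" where
  "sierpinskisation S A W \<longleftrightarrow> linear_order_on S A \<and> omega_type S W"

definition downset :: "'a set \<Rightarrow> 'a rel \<Rightarrow> 'a set \<Rightarrow> 'a set" where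
  "downset S R F = {x \<in> S. \<exists>y\<in>F. (x, y) \<in> R}"

definition initial_segments :: "'a set \<Rightarrow> 'a rel \<Rightarrow> 'a set set" where
  "initial_segments S R = {X. X \<subseteq> S \<and> (\<forall>x\<in>X. \<forall>y\<in>S. (y, x) \<in> R \<longrightarrow> y \<in> X)}"

definition fin_gen_initials :: "'a set \<Rightarrow> 'a rel \<Rightarrow> 'a set set" where
  "fin_gen_initials S R = {downset S R F | F. finite F \<and> F \<subseteq> S}"

definition ideals :: "'b set set \<Rightarrow> 'b set set set" where
  "ideals P = {I. I \<subseteq> P \<and> I \<noteq> {} \<and>
      (\<forall>x\<in>I. \<forall>y\<in>P. y \<subseteq> x \<longrightarrow> y \<in> I) \<and>
      (\<forall>x\<in>I. \<forall>y\<in>I. \<exists>z\<in>I. x \<subseteq> z \<and> y \<subseteq> z)}"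

text \<open>Membership of a family P of sets (ordered by inclusion, join = union) in the class
  J_alpha, where alpha is the type of the chain (S,A): P is a join-semilattice with least
  element and J(P) contains a chain of type I(alpha), i.e. there is an order embedding of
  the chain of initial segments of (S,A) into J(P).\<close>
definition in_J_class :: "'b set set \<Rightarrow> 'a set \<Rightarrow> 'a rel \<Rightarrow> bool" where
  "in_J_class P S A \<longleftrightarrow>
     (\<forall>X\<in>P. \<forall>Y\<in>P. X \<union> Y \<in> P) \<and> (\<exists>b\<in>P. \<forall>X\<in>P. b \<subseteq> X) \<and>
     (\<exists>f. (\<forall>X\<in>initial_segments S A. f X \<in> ideals P) \<and>
          (\<forall>X\<in>initial_segments S A. \<forall>Y\<in>initial_segments S A. f X \<subseteq> f Y \<longleftrightarrow> X \<subseteq> Y))"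

end

theory Submission
  imports Defs
begin

text \<open>Since the order of S is contained in an order of type omega, every principal
  initial segment, hence every finitely generated one, is finite; so the enumeration
  S \<rightarrow> nat of the omega order maps I_{<omega}(S) injectively, with unions preserved, into
  the finite subsets of nat. For the ideals, send an initial segment X of the chain
  (S,A) to the set of members of I_{<omega}(S) contained in X. This is an ideal because
  I_{<omega}(S) contains the empty set and is closed under unions, and it determines X
  because the principal segment below any x \<in> X belongs to I_{<omega}(S), contains x
  and, as the order of S refines A, lies inside X.\<close>

lemma fin_gen_initials_subset:
  "X \<in> fin_gen_initials S R \<Longrightarrow> X \<subseteq> S"
  unfolding fin_gen_initials_def downset_def by auto

lemma empty_in_fin_gen_initials: "{} \<in> fin_gen_initials S R"
  unfolding fin_gen_initials_def downset_def by auto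

lemma downset_singleton_in_fin_gen_initials:
  "x \<in> S \<Longrightarrow> downset S R {x} \<in> fin_gen_initials S R"
  unfolding fin_gen_initials_def by blast

lemma Un_in_fin_gen_initials:
  assumes "X \<in> fin_gen_initials S R" and "Y \<in> fin_gen_initials S R"
  shows "X \<union> Y \<in> fin_gen_initials S R"
proof -
  obtain F G where "finite F" "F \<subseteq> S" "X = downset S R F"
    and "finite G" "G \<subseteq> S" "Y = downset S R G"
    using assms unfolding fin_gen_initials_def by blast
  then have "finite (F \<union> G)" "F \<union> G \<subseteq> S" "X \<union> Y = downset S R (F \<union> G)"
    unfolding downset_def by auto
  then show ?thesis unfolding fin_gen_initials_def by blast
qed

lemma in_downset_singleton: "x \<in> S \<Longrightarrow> (x, x) \<in> R \<Longrightarrow> x \<in> downset S R {x}"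
  unfolding downset_def by blast

lemma downset_subset_initial_segment:
  assumes "R \<subseteq> A" and "X \<in> initial_segments S A" and "F \<subseteq> X"
  shows "downset S R F \<subseteq> X"
  using assms unfolding initial_segments_def downset_def by blast

lemma omega_type_refl: "omega_type S W \<Longrightarrow> x \<in> S \<Longrightarrow> (x, x) \<in> W"
  unfolding omega_type_def by blast

lemma finite_downset_omega:
  assumes "omega_type S W" and "R \<subseteq> W" and "finite F" and "F \<subseteq> S"
  shows "finite (downset S R F)"
proof -
  from assms(1) obtain h where bij: "bij_betw h S (UNIV :: nat set)"
    and ord: "\<forall>x\<in>S. \<forall>y\<in>S. (x, y) \<in> W \<longleftrightarrow> h x \<le> h y"
    unfolding omega_type_def by blast
  have "h ` downset S R F \<subseteq> {..Max (h ` F)}"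
  proof
    fix n assume "n \<in> h ` downset S R F"
    then obtain x y where "n = h x" and "x \<in> S" "y \<in> F" "(x, y) \<in> R"
      unfolding downset_def by blast
    then have "n \<le> h y" using ord assms(2,4) by blast
    also have "h y \<le> Max (h ` F)" using \<open>y \<in> F\<close> assms(3) by simp
    finally show "n \<in> {..Max (h ` F)}" by simp
  qed
  then have "finite (h ` downset S R F)" using finite_subset by blast
  moreover have "inj_on h (downset S R F)"
  proof (rule inj_on_subset)
    show "inj_on h S" using bij by (simp add: bij_betw_def)
    show "downset S R F \<subseteq> S" unfolding downset_def by blast
  qed
  ultimately show ?thesis by (rule finite_imageD)
qed

lemma finite_fin_gen_initials_omega:
  "omega_type S W \<Longrightarrow> R \<subseteq> W \<Longrightarrow> X \<in> fin_gen_initials S R \<Longrightarrow> finite X"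
  unfolding fin_gen_initials_def using finite_downset_omega by blast

lemma fin_gen_initials_embeds_into_finite_nat_sets:
  assumes "omega_type S W" and "R \<subseteq> W"
  shows "\<exists>g :: 'a set \<Rightarrow> nat set. inj_on g (fin_gen_initials S R) \<and>
           (\<forall>X\<in>fin_gen_initials S R. finite (g X)) \<and>
           (\<forall>X\<in>fin_gen_initials S R. \<forall>Y\<in>fin_gen_initials S R. g (X \<union> Y) = g X \<union> g Y)"
proof -
  from assms(1) obtain h :: "'a \<Rightarrow> nat" where "inj_on h S"
    unfolding omega_type_def bij_betw_def by blast
  then have "inj_on ((`) h) (fin_gen_initials S R)"
    by (intro inj_onI) (metis fin_gen_initials_subset inj_on_image_eq_iff)
  moreover have "finite (h ` X)" if "X \<in> fin_gen_initials S R" for X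
    using finite_fin_gen_initials_omega[OF assms that] by simp
  ultimately show ?thesis by (intro exI[of _ "(`) h"]) (simp add: image_Un)
qed

definition members_below :: "'b set set \<Rightarrow> 'b set \<Rightarrow> 'b set set" where
  "members_below P X = {D \<in> P. D \<subseteq> X}"

lemma members_below_in_ideals:
  assumes "{} \<in> P" and "\<forall>D\<in>P. \<forall>E\<in>P. D \<union> E \<in> P"
  shows "members_below P X \<in> ideals P"
proof -
  have "\<exists>F\<in>members_below P X. D \<subseteq> F \<and> E \<subseteq> F"
    if "D \<in> members_below P X" "E \<in> members_below P X" for D E
    using that assms(2) unfolding members_below_def by (intro bexI[of _ "D \<union> E"]) auto
  then show ?thesis
    using assms(1) unfolding ideals_def members_below_def by auto
qed

lemma members_below_subset_iff:
  assumes "\<And>x. x \<in> X \<Longrightarrow> \<exists>D\<in>P. x \<in> D \<and> D \<subseteq> X"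
  shows "members_below P X \<subseteq> members_below P Y \<longleftrightarrow> X \<subseteq> Y"
proof
  assume below: "members_below P X \<subseteq> members_below P Y"
  show "X \<subseteq> Y"
  proof
    fix x assume "x \<in> X"
    then obtain D where "D \<in> P" "x \<in> D" "D \<subseteq> X" using assms by blast
    then have "D \<subseteq> Y" using below unfolding members_below_def by blast
    then show "x \<in> Y" using \<open>x \<in> D\<close> by blast
  qed
qed (auto simp: members_below_def)

lemma in_J_classI:
  assumes "{} \<in> P" and union_closed: "\<forall>D\<in>P. \<forall>E\<in>P. D \<union> E \<in> P"
    and covers: "\<And>X x. X \<in> initial_segments S A \<Longrightarrow> x \<in> X \<Longrightarrow> \<exists>D\<in>P. x \<in> D \<and> D \<subseteq> X"
  shows "in_J_class P S A"
proof -
  have "\<forall>X\<in>initial_segments S A. members_below P X \<in> ideals P"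
    using members_below_in_ideals[OF assms(1) union_closed] by blast
  moreover have "\<forall>X\<in>initial_segments S A. \<forall>Y\<in>initial_segments S A.
      members_below P X \<subseteq> members_below P Y \<longleftrightarrow> X \<subseteq> Y"
    using members_below_subset_iff[OF covers] by blast
  moreover have "\<exists>b\<in>P. \<forall>X\<in>P. b \<subseteq> X"
    using assms(1) by blast
  ultimately show ?thesis
    unfolding in_J_class_def using union_closed by blast
qed

lemma fin_gen_initials_in_J_class:
  assumes "R \<subseteq> A" and refl: "\<And>x. x \<in> S \<Longrightarrow> (x, x) \<in> R"
  shows "in_J_class (fin_gen_initials S R) S A"
proof (rule in_J_classI)
  fix X x assume X: "X \<in> initial_segments S A" and "x \<in> X"
  then have "x \<in> S" unfolding initial_segments_def by blast
  have "downset S R {x} \<subseteq> X"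
    using downset_subset_initial_segment[OF assms(1) X] \<open>x \<in> X\<close> by blast
  then show "\<exists>D\<in>fin_gen_initials S R. x \<in> D \<and> D \<subseteq> X"
    using downset_singleton_in_fin_gen_initials[OF \<open>x \<in> S\<close>]
      in_downset_singleton[OF \<open>x \<in> S\<close> refl[OF \<open>x \<in> S\<close>]] by blast
qed (blast intro: empty_in_fin_gen_initials Un_in_fin_gen_initials)+

theorem lemma2p1:
  fixes S :: "'a set" and A W :: "'a rel"
  assumes "sierpinskisation S A W"
  shows "(\<exists>g :: 'a set \<Rightarrow> nat set. inj_on g (fin_gen_initials S (A \<inter> W)) \<and>
            (\<forall>X\<in>fin_gen_initials S (A \<inter> W). finite (g X)) \<and>
            (\<forall>X\<in>fin_gen_initials S (A \<inter> W). \<forall>Y\<in>fin_gen_initials S (A \<inter> W).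
                g (X \<union> Y) = g X \<union> g Y))
       \<and> in_J_class (fin_gen_initials S (A \<inter> W)) S A"
proof -
  from assms have lin: "linear_order_on S A" and om: "omega_type S W"
    unfolding sierpinskisation_def by auto
  have "(x, x) \<in> A \<inter> W" if "x \<in> S" for x
  proof
    show "(x, x) \<in> A"
      using lin that unfolding linear_order_on_def partial_order_on_def preorder_on_def
      by (blast dest: refl_onD)
    show "(x, x) \<in> W" using omega_type_refl[OF om that] .
  qed
  then show ?thesis
    using fin_gen_initials_embeds_into_finite_nat_sets[OF om inf_le2]
      fin_gen_initials_in_J_class[OF inf_le1] by blast
qed

end
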